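(* Let $G=(V,E)$ be a finite connected graph with $n=|V|\ge 2$ vertices, distance matrix $D$, and diameter $L=\mathrm{diam}(G)$. Let $K\in\mathbb{R}_{\ge 0}^n$ be any solution of $DK=n\mathbf{1}_n$. Then $$\min_i K_i\cdot \mathrm{diam}(G)\le 2,$$ i.e. $\mathrm{diam}(G)\le 2/\min_iK_i$ whenever $\min_i K_i>0$. Moreover, if $\min_i K_i=2/L$, then $K_i=2/L$ for all $i$ (the solution is constant).
   Context: All graphs are finite, simple, connected and undirected, with the combinatorial shortest-path distance $d$. For $V=\{v_1,\dots,v_n\}$, $D=(d(v_i,v_j))_{i,j=1}^n$ is the distance matrix and $\mathbf{1}_n$ the all-ones column vector of length $n$. *)

theory Defs
  imports Complex_Main
begin

definition simple_graph :: "'a set \<Rightarrow> ('a \<Rightarrow> 'a \<Rightarrow> bool) \<Rightarrow> bool" where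
  "simple_graph V E \<longleftrightarrow> finite V \<and> (\<forall>u v. E u v \<longrightarrow> u \<in> V \<and> v \<in> V)
     \<and> (\<forall>u v. E u v \<longrightarrow> E v u) \<and> (\<forall>u. \<not> E u u)"

definition is_walk :: "'a set \<Rightarrow> ('a \<Rightarrow> 'a \<Rightarrow> bool) \<Rightarrow> 'a list \<Rightarrow> bool" where
  "is_walk V E xs \<longleftrightarrow> xs \<noteq> [] \<and> set xs \<subseteq> V \<and> (\<forall>i. Suc i < length xs \<longrightarrow> E (xs ! i) (xs ! Suc i))"

definition walk_of_len :: "'a set \<Rightarrow> ('a \<Rightarrow> 'a \<Rightarrow> bool) \<Rightarrow> 'a \<Rightarrow> 'a \<Rightarrow> nat \<Rightarrow> bool" where
  "walk_of_len V E u v k \<longleftrightarrow> (\<exists>xs. is_walk V E xs \<and> length xs = Suc k \<and> hd xs = u \<and> last xs = v)"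

definition connected_graph :: "'a set \<Rightarrow> ('a \<Rightarrow> 'a \<Rightarrow> bool) \<Rightarrow> bool" where
  "connected_graph V E \<longleftrightarrow> (\<forall>u\<in>V. \<forall>v\<in>V. \<exists>k. walk_of_len V E u v k)"

definition gdist :: "'a set \<Rightarrow> ('a \<Rightarrow> 'a \<Rightarrow> bool) \<Rightarrow> 'a \<Rightarrow> 'a \<Rightarrow> nat" where
  "gdist V E u v = (LEAST k. walk_of_len V E u v k)"

definition diam :: "'a set \<Rightarrow> ('a \<Rightarrow> 'a \<Rightarrow> bool) \<Rightarrow> nat" where
  "diam V E = Max {gdist V E u v | u v. u \<in> V \<and> v \<in> V}"

end

theory Submission
  imports Defs
begin

text \<open>Choose \<open>u, v\<close> with \<open>d(u,v) = L\<close>. By the triangle inequality \<open>L \<le> d(u,i) + d(v,i)\<close> for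
  every vertex \<open>i\<close>, so weighting with \<open>K \<ge> 0\<close> and summing the rows \<open>u\<close> and \<open>v\<close> of \<open>DK = n\<one>\<close>
  gives \<open>L \<Sum>\<^sub>i K\<^sub>i \<le> 2n\<close>. Since \<open>n min\<^sub>i K\<^sub>i \<le> \<Sum>\<^sub>i K\<^sub>i\<close>, this yields \<open>L min\<^sub>i K\<^sub>i \<le> 2\<close>, and equality
  forces every \<open>K\<^sub>i\<close> to equal the minimum.\<close>

lemma Min_le_of_sum_le_card_mult:
  fixes f :: "'a \<Rightarrow> real"
  assumes "finite A" "A \<noteq> {}" "sum f A \<le> real (card A) * b"
  shows "(MIN i\<in>A. f i) \<le> b"
proof -
  have "real (card A) * (MIN i\<in>A. f i) \<le> sum f A"
    using assms(1) by (intro sum_bounded_below) simp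
  with assms have "real (card A) * (MIN i\<in>A. f i) \<le> real (card A) * b" by linarith
  moreover have "real (card A) > 0" using assms(1,2) by (simp add: card_gt_0_iff)
  ultimately show ?thesis by simp
qed

lemma const_of_Min_eq_of_sum_le_card_mult:
  fixes f :: "'a \<Rightarrow> real"
  assumes "finite A" "sum f A \<le> real (card A) * b" "(MIN i\<in>A. f i) = b" "i \<in> A"
  shows "f i = b"
proof -
  have ge: "\<And>j. j \<in> A \<Longrightarrow> b \<le> f j" using assms(1,3) by auto
  have "(\<Sum>j\<in>A. f j - b) = sum f A - real (card A) * b"
    by (simp add: sum_subtractf)
  also have "\<dots> \<le> 0" using assms(2) by simp
  finally have "(\<Sum>j\<in>A. f j - b) = 0"
    using sum_nonneg[of A "\<lambda>j. f j - b"] ge by fastforce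
  then have "\<forall>j\<in>A. f j - b = 0" using sum_nonneg_eq_0_iff[OF assms(1), of "\<lambda>j. f j - b"] ge by simp
  then show ?thesis using assms(4) by simp
qed

lemma is_walk_iff_successively:
  "is_walk V E xs \<longleftrightarrow> xs \<noteq> [] \<and> set xs \<subseteq> V \<and> successively E xs"
  unfolding is_walk_def successively_conv_nth ..

lemma walk_of_len_rev:
  assumes "simple_graph V E" "walk_of_len V E u v k"
  shows "walk_of_len V E v u k"
proof -
  obtain xs where xs: "is_walk V E xs" "length xs = Suc k" "hd xs = u" "last xs = v"
    using assms(2) unfolding walk_of_len_def by blast
  have sym: "\<And>x y. E x y \<Longrightarrow> E y x" using assms(1) unfolding simple_graph_def by blast
  have "successively E xs" using xs(1) unfolding is_walk_iff_successively by blast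
  then have "successively (\<lambda>x y. E y x) xs" by (rule successively_mono) (rule sym)
  then have "is_walk V E (rev xs)"
    using xs(1) unfolding is_walk_iff_successively successively_rev set_rev by blast
  moreover have "hd (rev xs) = v" "last (rev xs) = u"
    using xs(2-4) by (simp_all add: hd_rev last_rev)
  ultimately show ?thesis unfolding walk_of_len_def using xs(2) by (metis length_rev)
qed

lemma walk_of_len_append:
  assumes "walk_of_len V E u w a" "walk_of_len V E w v b"
  shows "walk_of_len V E u v (a + b)"
proof -
  obtain xs where xs: "is_walk V E xs" "length xs = Suc a" "hd xs = u" "last xs = w"
    using assms(1) unfolding walk_of_len_def by blast
  obtain y ys where ys: "is_walk V E (y # ys)" "length ys = b" "y = w" "last (y # ys) = v"
    using assms(2) unfolding walk_of_len_def by (metis Suc_length_conv list.sel(1))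
  have "successively E (xs @ ys)"
    using xs(1,4) ys(1,3) by (auto simp: is_walk_iff_successively successively_append_iff successively_Cons)
  then have "is_walk V E (xs @ ys)" using xs(1) ys(1) by (auto simp: is_walk_iff_successively)
  moreover have "hd (xs @ ys) = u" "last (xs @ ys) = v"
    using xs(2-4) ys(3,4) by (auto simp: last_ConsR hd_append)
  ultimately show ?thesis unfolding walk_of_len_def using xs(2) ys(2) by force
qed

lemma walk_of_len_gdist:
  assumes "connected_graph V E" "u \<in> V" "v \<in> V"
  shows "walk_of_len V E u v (gdist V E u v)"
  using assms unfolding connected_graph_def gdist_def by (meson LeastI_ex)

lemma gdist_le_walk: "walk_of_len V E u v k \<Longrightarrow> gdist V E u v \<le> k"
  unfolding gdist_def by (rule Least_le)

lemma gdist_sym: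
  assumes "simple_graph V E" "connected_graph V E" "u \<in> V" "v \<in> V"
  shows "gdist V E u v = gdist V E v u"
proof -
  have "gdist V E x y \<le> gdist V E y x" if "x \<in> V" "y \<in> V" for x y
    using gdist_le_walk walk_of_len_rev[OF assms(1) walk_of_len_gdist[OF assms(2) that(2,1)]] .
  then show ?thesis using assms(3,4) by (simp add: le_antisym)
qed

lemma gdist_triangle:
  assumes "connected_graph V E" "u \<in> V" "w \<in> V" "v \<in> V"
  shows "gdist V E u v \<le> gdist V E u w + gdist V E w v"
  using walk_of_len_append[OF walk_of_len_gdist[OF assms(1-3)] walk_of_len_gdist[OF assms(1,3,4)]]
  by (rule gdist_le_walk)

lemma gdist_pos:
  assumes "connected_graph V E" "u \<in> V" "v \<in> V" "u \<noteq> v"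
  shows "gdist V E u v > 0"
proof (rule ccontr)
  assume "\<not> ?thesis"
  then have "walk_of_len V E u v 0" using walk_of_len_gdist[OF assms(1-3)] by simp
  then obtain xs where "length xs = 1" "hd xs = u" "last xs = v" unfolding walk_of_len_def by auto
  then show False using assms(4) by (cases xs) auto
qed

lemma finite_gdist_values:
  "finite V \<Longrightarrow> finite {gdist V E u v | u v. u \<in> V \<and> v \<in> V}"
  by (rule finite_image_set2) simp_all

lemma diam_attained:
  assumes "finite V" "V \<noteq> {}"
  obtains u v where "u \<in> V" "v \<in> V" "gdist V E u v = diam V E"
proof -
  have "diam V E \<in> {gdist V E u v | u v. u \<in> V \<and> v \<in> V}"
    unfolding diam_def
    by (rule Max_in[OF finite_gdist_values[OF assms(1)]]) (use assms(2) in blast)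
  then obtain u v where "u \<in> V" "v \<in> V" "diam V E = gdist V E u v" by blast
  then show ?thesis by (intro that) simp_all
qed

lemma gdist_le_diam:
  "finite V \<Longrightarrow> u \<in> V \<Longrightarrow> v \<in> V \<Longrightarrow> gdist V E u v \<le> diam V E"
  unfolding diam_def by (rule Max_ge[OF finite_gdist_values]) blast+

lemma diam_pos:
  assumes "simple_graph V E" "connected_graph V E" "card V \<ge> 2"
  shows "diam V E > 0"
proof -
  have fin: "finite V" using assms(1) unfolding simple_graph_def by blast
  obtain a b where "a \<in> V" "b \<in> V" "a \<noteq> b"
    using assms(3) by (metis card_le_Suc0_iff_eq fin not_less_eq_eq numeral_2_eq_2)
  then show ?thesis
    using gdist_pos[OF assms(2)] gdist_le_diam[OF fin] by (metis order.strict_trans2)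
qed

lemma diam_mult_sum_le:
  assumes "simple_graph V E" "connected_graph V E" "V \<noteq> {}"
    and nonneg: "\<forall>i\<in>V. K i \<ge> 0"
    and row_sums: "\<forall>i\<in>V. (\<Sum>j\<in>V. real (gdist V E i j) * K j) = real (card V)"
  shows "real (diam V E) * sum K V \<le> 2 * real (card V)"
proof -
  have fin: "finite V" using assms(1) unfolding simple_graph_def by blast
  obtain u v where uv: "u \<in> V" "v \<in> V" "gdist V E u v = diam V E"
    using diam_attained[OF fin assms(3)] .
  have "real (diam V E) * sum K V = (\<Sum>i\<in>V. real (diam V E) * K i)"
    by (simp add: sum_distrib_left)
  also have "\<dots> \<le> (\<Sum>i\<in>V. (real (gdist V E u i) + real (gdist V E v i)) * K i)"
  proof (rule sum_mono)
    fix i assume i: "i \<in> V"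
    have "diam V E \<le> gdist V E u i + gdist V E v i"
      using gdist_triangle[OF assms(2) uv(1) i uv(2)] gdist_sym[OF assms(1,2) i uv(2)] uv(3)
      by simp
    then show "real (diam V E) * K i \<le> (real (gdist V E u i) + real (gdist V E v i)) * K i"
      using nonneg i by (intro mult_right_mono) simp_all
  qed
  also have "\<dots> = 2 * real (card V)"
    using row_sums uv(1,2) by (simp add: distrib_right sum.distrib)
  finally show ?thesis .
qed

theorem mainTheorem7:
  fixes V :: "'a set" and E :: "'a \<Rightarrow> 'a \<Rightarrow> bool" and K :: "'a \<Rightarrow> real"
  assumes "simple_graph V E" and "connected_graph V E" and "card V \<ge> 2"
    and "\<forall>i\<in>V. K i \<ge> 0"
    and "\<forall>i\<in>V. (\<Sum>j\<in>V. real (gdist V E i j) * K j) = real (card V)"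
  shows "(MIN i\<in>V. K i) * real (diam V E) \<le> 2
         \<and> ((MIN i\<in>V. K i) = 2 / real (diam V E) \<longrightarrow> (\<forall>i\<in>V. K i = 2 / real (diam V E)))"
proof -
  have fin: "finite V" using assms(1) unfolding simple_graph_def by blast
  have ne: "V \<noteq> {}" using assms(3) by auto
  have L: "real (diam V E) > 0" using diam_pos[OF assms(1-3)] by simp
  have "real (diam V E) * sum K V \<le> 2 * real (card V)"
    using diam_mult_sum_le[OF assms(1,2) ne assms(4,5)] .
  then have bound: "sum K V \<le> real (card V) * (2 / real (diam V E))"
    using L by (simp add: field_simps)
  have "(MIN i\<in>V. K i) \<le> 2 / real (diam V E)"
    using Min_le_of_sum_le_card_mult[OF fin ne bound] .
  then have "(MIN i\<in>V. K i) * real (diam V E) \<le> 2" using L by (simp add: field_simps)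
  moreover have "\<forall>i\<in>V. K i = 2 / real (diam V E)" if "(MIN i\<in>V. K i) = 2 / real (diam V E)"
    using const_of_Min_eq_of_sum_le_card_mult[OF fin bound that] by blast
  ultimately show ?thesis by blast
qed

end
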